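(* Suppose $\tau$-independent conditions $\lambda = 2c_0b'\sqrt{\frac{\log p}{n}}$ and $n\succsim k\log p$ hold, and let $0<\sigma_{\min}\le\sigma^*\le\sigma_{\max}$. Let $\widehat{\beta}_{(j_* )}$ be the output of Lepski's method described in the context. Then, with probability at least $$1 - \log_2\Big(\frac{4\sigma_{\max}}{\sigma_{\min}}\Big)\, c\exp(-c'n),$$ we have $$\|\widehat{\beta}_{(j_* )} - \beta^*\|_2 \le 18C\sigma^*\sqrt{\frac{k\log p}{n}}, \qquad \|\widehat{\beta}_{(j_* )} - \beta^*\|_1 \le 72C\sigma^* k\sqrt{\frac{\log p}{n}}.$$
   Context: Observations $\{(x_i,y_i)\}_{i=1}^n$ are i.i.d. from $y_i = x_i^T\beta^* + \epsilon_i$, with $\beta^*\in\mathbb{R}^p$ unknown, $x_i$ and $\epsilon_i$ independent, $\mathbb{E}[x_i]=0$, $\mathbb{E}[\epsilon_i]=0$, $\epsilon_i$ symmetric about $0$, $\|\beta^*\|_0\le k$ with $k<n\ll p$, and $\sigma^*:=\sqrt{\mathrm{Var}(\epsilon_i)}$. Huber loss: $\ell_\tau(u)=u^2/2$ for $|u|\le\tau$, $\tau|u|-\tau^2/2$ otherwise. Weight $w(x)=\min\{1,b/\|Bx\|_2\}$ for fixed $b>0$, $B\in\mathbb{R}^{p\times p}$, and $b':=b/\lambda_{\min}(B)$. For $\tau>0$, $\widehat\beta_\tau$ denotes a global minimizer of $\frac1n\sum_{i}\ell_\tau((x_i^T\beta-y_i)w(x_i))w(x_i)+\lambda\tau\|\beta\|_1$.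 The constants $c_0, c, c', C>0$ are such that, whenever $\lambda = 2c_0b'\sqrt{\log p/n}$, $n\succsim k\log p$ and $\tau\ge 3\sigma^*$, with probability at least $1-c\exp(-c'n)$ one has $\|\widehat\beta_\tau-\beta^*\|_2\le C\tau\sqrt{k\log p/n}$ and $\|\widehat\beta_\tau-\beta^*\|_1\le 4C\tau k\sqrt{\log p/n}$. Lepski's method: let $\sigma_j=\sigma_{\min}2^j$ and $\mathcal{J}=\{j\ge1: \sigma_{\min}\le\sigma_j<2\sigma_{\max}\}$. Let $\widehat\beta_{(j)}$ denote $\widehat\beta_\tau$ with $\tau=3\sigma_j$. Define $$j_*=\min\Big\{j\in\mathcal{J}:\ \forall i\in\mathcal{J},\, i>j:\ \|\widehat\beta_{(i)}-\widehat\beta_{(j)}\|_2\le 6C\sigma_i\sqrt{\tfrac{k\log p}{n}}\ \text{and}\ \|\widehat\beta_{(i)}-\widehat\beta_{(j)}\|_1\le 24C\sigma_i k\sqrt{\tfrac{\log p}{n}}\Big\},$$ with $j_*=\infty$ if no such index exists. *)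

theory Defs
  imports "HOL-Probability.Probability" "HOL-Analysis.Analysis"
begin

definition huber :: "real \<Rightarrow> real \<Rightarrow> real" where
  "huber \<tau> u = (if \<bar>u\<bar> \<le> \<tau> then u\<^sup>2 / 2 else \<tau> * \<bar>u\<bar> - \<tau>\<^sup>2 / 2)"

definition l1norm :: "real ^ 'p \<Rightarrow> real" where
  "l1norm v = (\<Sum>i\<in>UNIV. \<bar>v $ i\<bar>)"

definition l0norm :: "real ^ 'p \<Rightarrow> nat" where
  "l0norm v = card {i. v $ i \<noteq> 0}"

definition wgt :: "real \<Rightarrow> real ^ 'p ^ 'p \<Rightarrow> real ^ 'p \<Rightarrow> real" where
  "wgt b B x = min 1 (b / norm (B *v x))"

definition lambda_min :: "real ^ 'p ^ 'p \<Rightarrow> real" where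
  "lambda_min B = Inf {\<mu>. \<exists>v. v \<noteq> 0 \<and> B *v v = \<mu> *\<^sub>R v}"

definition huber_obj ::
  "nat \<Rightarrow> real \<Rightarrow> real ^ 'p ^ 'p \<Rightarrow> real \<Rightarrow> real \<Rightarrow> (nat \<Rightarrow> real ^ 'p) \<Rightarrow> (nat \<Rightarrow> real)
     \<Rightarrow> real ^ 'p \<Rightarrow> real" where
  "huber_obj n b B lam \<tau> xs ys \<beta> =
     (1 / real n) * (\<Sum>i<n. huber \<tau> ((xs i \<bullet> \<beta> - ys i) * wgt b B (xs i)) * wgt b B (xs i))
     + lam * \<tau> * l1norm \<beta>"

definition lepski_J :: "real \<Rightarrow> real \<Rightarrow> nat set" where
  "lepski_J smin smax = {j. j \<ge> 1 \<and> smin \<le> smin * 2 ^ j \<and> smin * 2 ^ j < 2 * smax}"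

definition lepski_ok ::
  "real \<Rightarrow> real \<Rightarrow> real \<Rightarrow> nat \<Rightarrow> nat \<Rightarrow> nat \<Rightarrow> (nat \<Rightarrow> real ^ 'p) \<Rightarrow> nat \<Rightarrow> bool" where
  "lepski_ok smin smax C k n p bh j \<longleftrightarrow>
     j \<in> lepski_J smin smax \<and>
     (\<forall>i\<in>lepski_J smin smax. i > j \<longrightarrow>
        norm (bh i - bh j) \<le> 6 * C * (smin * 2 ^ i) * sqrt (real k * ln (real p) / real n) \<and>
        l1norm (bh i - bh j) \<le> 24 * C * (smin * 2 ^ i) * real k * sqrt (ln (real p) / real n))"

text \<open>Lepski's index j_*; None encodes j_* = infinity.\<close>
definition lepski_index ::
  "real \<Rightarrow> real \<Rightarrow> real \<Rightarrow> nat \<Rightarrow> nat \<Rightarrow> nat \<Rightarrow> (nat \<Rightarrow> real ^ 'p) \<Rightarrow> nat option" where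
  "lepski_index smin smax C k n p bh =
     (if \<exists>j. lepski_ok smin smax C k n p bh j
      then Some (LEAST j. lepski_ok smin smax C k n p bh j) else None)"

end

theory Submission
  imports Defs
begin

(*
  Work on the event that the single-tau bound holds at every grid level tau = 3 sigma_j with
  sigma_j >= sigma*.  By the union bound it has probability at least 1 - |J| c exp(-c' n), and
  |J| <= log_2 (2 sigma_max / sigma_min).  Let j_o be the first grid index with sigma_{j_o} >= sigma*,
  so that sigma_{j_o} <= 2 sigma*.  On the event the triangle inequality shows that j_o passes
  Lepski's test, hence j_* <= j_o; and since j_* passes the test against j_o, the selected
  estimate is within 6 sigma_{j_o} + 3 sigma_{j_o} <= 18 sigma* (in units of the rates) of beta*.
*)

lemma borel_measurable_l1norm [measurable]: "l1norm \<in> borel_measurable borel"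
  unfolding l1norm_def[abs_def] by (intro borel_measurable_continuous_onI continuous_intros)

lemma l1norm_triangle_ineq: "l1norm (u + v) \<le> l1norm u + l1norm (v :: real ^ 'p)"
  unfolding l1norm_def by (simp add: sum.distrib[symmetric] sum_mono abs_triangle_ineq)

lemma l1norm_minus_commute: "l1norm (u - v) = l1norm (v - u :: real ^ 'p)"
  unfolding l1norm_def by (simp add: abs_minus_commute)

definition within_rate :: "real \<Rightarrow> nat \<Rightarrow> nat \<Rightarrow> nat \<Rightarrow> real \<Rightarrow> real ^ 'p \<Rightarrow> real ^ 'p \<Rightarrow> bool" where
  "within_rate C k n p \<tau> u v \<longleftrightarrow>
     norm (u - v) \<le> C * \<tau> * sqrt (real k * ln (real p) / real n) \<and>
     l1norm (u - v) \<le> 4 * C * \<tau> * real k * sqrt (ln (real p) / real n)"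

lemma pred_within_rate [measurable]:
  assumes [measurable]: "f \<in> borel_measurable M" "g \<in> borel_measurable M"
  shows "Measurable.pred M (\<lambda>\<omega>. within_rate C k n p \<tau> (f \<omega>) (g \<omega>))"
  unfolding within_rate_def by measurable

lemma within_rate_commute: "within_rate C k n p \<tau> u v \<longleftrightarrow> within_rate C k n p \<tau> v u"
  unfolding within_rate_def by (simp add: norm_minus_commute l1norm_minus_commute)

lemma within_rate_trans:
  assumes "within_rate C k n p \<tau> u v" "within_rate C k n p \<tau>' v w"
  shows "within_rate C k n p (\<tau> + \<tau>') u w"
proof -
  have "norm (u - w) \<le> norm (u - v) + norm (v - w)"
    using norm_triangle_ineq[of "u - v" "v - w"] by simp
  moreover have "l1norm (u - w) \<le> l1norm (u - v) + l1norm (v - w)"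
    using l1norm_triangle_ineq[of "u - v" "v - w"] by simp
  ultimately show ?thesis using assms unfolding within_rate_def by (simp add: algebra_simps)
qed

lemma within_rate_mono:
  assumes "within_rate C k n p \<tau> u v" "\<tau> \<le> \<tau>'" "0 \<le> C" "1 \<le> p"
  shows "within_rate C k n p \<tau>' u v"
proof -
  have "0 \<le> ln (real p)" using \<open>1 \<le> p\<close> by simp
  then have "C * \<tau> * sqrt (real k * ln (real p) / real n) \<le> C * \<tau>' * sqrt (real k * ln (real p) / real n)"
    and "4 * C * \<tau> * real k * sqrt (ln (real p) / real n) \<le> 4 * C * \<tau>' * real k * sqrt (ln (real p) / real n)"
    using assms(2,3) by (simp_all add: mult_left_mono mult_right_mono)
  with assms(1) show ?thesis unfolding within_rate_def by linarith
qed

lemma lepski_ok_iff_within_rate: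
  "lepski_ok smin smax C k n p bh j \<longleftrightarrow>
     j \<in> lepski_J smin smax \<and>
     (\<forall>i\<in>lepski_J smin smax. j < i \<longrightarrow> within_rate C k n p (6 * (smin * 2 ^ i)) (bh i) (bh j))"
  unfolding lepski_ok_def within_rate_def by (simp add: algebra_simps)

lemma lepski_J_brackets:
  assumes "0 < smin" "smin \<le> s" "s \<le> smax" "smin < smax"
  obtains j where "j \<in> lepski_J smin smax" "s \<le> smin * 2 ^ j" "smin * 2 ^ j \<le> 2 * s"
proof (cases "s \<le> smin * 2")
  case True
  with assms show ?thesis by (intro that[of 1]) (auto simp: lepski_J_def)
next
  case False
  obtain m where "s / smin < 2 ^ m" using real_arch_pow[of 2 "s / smin"] by auto
  then have "s < smin * 2 ^ m" using \<open>0 < smin\<close> by (simp add: field_simps)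
  also have "\<dots> \<le> smin * 2 ^ Suc m" using \<open>0 < smin\<close> by simp
  finally have "\<exists>m. s \<le> smin * 2 ^ Suc m" by (blast intro: less_imp_le)
  then obtain m where below: "\<not> s \<le> smin * 2 ^ Suc m" and above: "s \<le> smin * 2 ^ Suc (Suc m)"
    using exists_least_lemma[of "\<lambda>m. s \<le> smin * 2 ^ Suc m"] False by auto
  have "smin * 2 ^ Suc (Suc m) < 2 * s" using below by simp
  with assms above show ?thesis
    by (intro that[of "Suc (Suc m)"]) (auto simp: lepski_J_def one_le_power)
qed

lemma lepski_J_subset:
  assumes "0 < smin"
  shows "lepski_J smin smax \<subseteq> {1..nat \<lfloor>log 2 (2 * smax / smin)\<rfloor>}"
proof
  fix j assume "j \<in> lepski_J smin smax"
  then have "1 \<le> j" and "smin * 2 ^ j < 2 * smax" by (simp_all add: lepski_J_def)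
  then have "2 powr real j < 2 * smax / smin"
    using assms by (simp add: powr_realpow pos_less_divide_eq mult.commute)
  moreover from this have "0 < 2 * smax / smin"
    using powr_gt_zero[of 2 "real j"] by linarith
  ultimately have "real j < log 2 (2 * smax / smin)" by (simp add: less_log_iff)
  then have "int j \<le> \<lfloor>log 2 (2 * smax / smin)\<rfloor>" by (simp add: le_floor_iff)
  with \<open>1 \<le> j\<close> show "j \<in> {1..nat \<lfloor>log 2 (2 * smax / smin)\<rfloor>}" by simp
qed

lemma finite_lepski_J: "0 < smin \<Longrightarrow> finite (lepski_J smin smax)"
  using lepski_J_subset finite_subset by blast

lemma card_lepski_J_le_log:
  assumes "0 < smin" "smin \<le> 2 * smax"
  shows "real (card (lepski_J smin smax)) \<le> log 2 (2 * smax / smin)"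
proof -
  have "0 \<le> log 2 (2 * smax / smin)" using assms by simp
  have "card (lepski_J smin smax) \<le> nat \<lfloor>log 2 (2 * smax / smin)\<rfloor>"
    using card_mono[OF _ lepski_J_subset[OF assms(1)]] by simp
  then show ?thesis using \<open>0 \<le> log 2 (2 * smax / smin)\<close> by linarith
qed

lemma measurable_lepski_index [measurable]:
  assumes [measurable]: "\<And>i. bh i \<in> borel_measurable M"
  shows "(\<lambda>\<omega>. lepski_index smin smax C k n p (\<lambda>i. bh i \<omega>)) \<in> measurable M (count_space UNIV)"
  unfolding lepski_index_def lepski_ok_def by measurable

lemma lepski_index_within_rate:
  fixes bh :: "nat \<Rightarrow> real ^ 'p"
  assumes "0 \<le> C" "1 \<le> p" "0 < smin" and jo: "jo \<in> lepski_J smin smax"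
    and close: "\<And>j. j \<in> lepski_J smin smax \<Longrightarrow> jo \<le> j \<Longrightarrow>
      within_rate C k n p (3 * (smin * 2 ^ j)) (bh j) \<beta>"
  shows "\<exists>j. lepski_index smin smax C k n p bh = Some j \<and>
    within_rate C k n p (9 * (smin * 2 ^ jo)) (bh j) \<beta>"
proof -
  let ?ok = "lepski_ok smin smax C k n p bh"
  have "?ok jo"
    unfolding lepski_ok_iff_within_rate
  proof (intro conjI ballI impI jo)
    fix i assume "i \<in> lepski_J smin smax" "jo < i"
    then have "within_rate C k n p (3 * (smin * 2 ^ i)) (bh i) \<beta>"
      using close by simp
    moreover have "within_rate C k n p (3 * (smin * 2 ^ jo)) \<beta> (bh jo)"
      using close[OF jo order_refl] by (simp add: within_rate_commute)
    ultimately have "within_rate C k n p (3 * (smin * 2 ^ i) + 3 * (smin * 2 ^ jo)) (bh i) (bh jo)"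
      by (rule within_rate_trans)
    moreover have "smin * 2 ^ jo \<le> smin * 2 ^ i"
      using \<open>jo < i\<close> \<open>0 < smin\<close> by simp
    ultimately show "within_rate C k n p (6 * (smin * 2 ^ i)) (bh i) (bh jo)"
      using assms(1,2) by (elim within_rate_mono) auto
  qed
  define j where "j = (LEAST j. ?ok j)"
  have "?ok j" "j \<le> jo"
    unfolding j_def using \<open>?ok jo\<close> by (auto intro: LeastI Least_le)
  have "within_rate C k n p (9 * (smin * 2 ^ jo)) (bh j) \<beta>"
  proof (cases "j = jo")
    case True
    show ?thesis
      unfolding True by (rule within_rate_mono[OF close[OF jo order_refl]]) (use assms in auto)
  next
    case False
    with \<open>?ok j\<close> \<open>j \<le> jo\<close> jo have "within_rate C k n p (6 * (smin * 2 ^ jo)) (bh jo) (bh j)"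
      by (simp add: lepski_ok_iff_within_rate)
    then have "within_rate C k n p (6 * (smin * 2 ^ jo)) (bh j) (bh jo)"
      by (simp add: within_rate_commute)
    from within_rate_trans[OF this close[OF jo order_refl]] show ?thesis
      by (simp add: algebra_simps)
  qed
  moreover have "lepski_index smin smax C k n p bh = Some j"
    using \<open>?ok jo\<close> by (auto simp: lepski_index_def j_def)
  ultimately show ?thesis by auto
qed

lemma (in prob_space) prob_all_ge_1_minus_card:
  assumes "finite K"
    and [measurable]: "\<And>j. j \<in> K \<Longrightarrow> Measurable.pred M (P j)"
    and "\<And>j. j \<in> K \<Longrightarrow> \<P>(\<omega> in M. P j \<omega>) \<ge> 1 - \<delta>"
  shows "\<P>(\<omega> in M. \<forall>j\<in>K. P j \<omega>) \<ge> 1 - real (card K) * \<delta>"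
proof -
  have "{\<omega> \<in> space M. \<not> (\<forall>j\<in>K. P j \<omega>)} = (\<Union>j\<in>K. {\<omega> \<in> space M. \<not> P j \<omega>})"
    by auto
  then have "\<P>(\<omega> in M. \<not> (\<forall>j\<in>K. P j \<omega>)) \<le> (\<Sum>j\<in>K. \<P>(\<omega> in M. \<not> P j \<omega>))"
    using finite_measure_subadditive_finite[OF assms(1), of "\<lambda>j. {\<omega> \<in> space M. \<not> P j \<omega>}"]
    by (auto simp: image_subset_iff)
  also have "\<dots> \<le> (\<Sum>j\<in>K. \<delta>)"
  proof (intro sum_mono)
    fix j assume "j \<in> K"
    then show "\<P>(\<omega> in M. \<not> P j \<omega>) \<le> \<delta>"
      using assms(3)[of j] prob_neg[of "P j"] by simp
  qed
  moreover have "{\<omega> \<in> space M. \<forall>j\<in>K. P j \<omega>} \<in> events"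
    using assms(1) by measurable
  ultimately show ?thesis
    using prob_neg[of "\<lambda>\<omega>. \<forall>j\<in>K. P j \<omega>"] by simp
qed

lemma (in prob_space) lepski_index_within_rate_prob:
  fixes bh :: "nat \<Rightarrow> 'a \<Rightarrow> real ^ 'p"
  assumes "0 \<le> C" "1 \<le> p" "0 < smin" "0 \<le> \<delta>"
    and jo: "jo \<in> lepski_J smin smax" and "9 * (smin * 2 ^ jo) \<le> \<tau>"
    and [measurable]: "\<And>j. bh j \<in> borel_measurable M"
    and close: "\<And>j. j \<in> lepski_J smin smax \<Longrightarrow> jo \<le> j \<Longrightarrow>
      \<P>(\<omega> in M. within_rate C k n p (3 * (smin * 2 ^ j)) (bh j \<omega>) \<beta>) \<ge> 1 - \<delta>"
  shows "\<P>(\<omega> in M. \<exists>j. lepski_index smin smax C k n p (\<lambda>i. bh i \<omega>) = Some j \<and>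
      within_rate C k n p \<tau> (bh j \<omega>) \<beta>) \<ge> 1 - real (card (lepski_J smin smax)) * \<delta>"
proof -
  define K where "K = {j \<in> lepski_J smin smax. jo \<le> j}"
  have "finite K" "card K \<le> card (lepski_J smin smax)"
    unfolding K_def using finite_lepski_J[OF \<open>0 < smin\<close>] by (auto intro: card_mono)
  then have "1 - real (card (lepski_J smin smax)) * \<delta> \<le> 1 - real (card K) * \<delta>"
    using \<open>0 \<le> \<delta>\<close> by (simp add: mult_right_mono)
  also have "\<dots> \<le> \<P>(\<omega> in M. \<forall>j\<in>K. within_rate C k n p (3 * (smin * 2 ^ j)) (bh j \<omega>) \<beta>)"
    using close by (intro prob_all_ge_1_minus_card[OF \<open>finite K\<close>]) (auto simp: K_def)
  also have "\<dots> \<le> \<P>(\<omega> in M. \<exists>j. lepski_index smin smax C k n p (\<lambda>i. bh i \<omega>) = Some j \<and>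
      within_rate C k n p \<tau> (bh j \<omega>) \<beta>)"
  proof (intro finite_measure_mono; safe?)
    fix \<omega> assume "\<forall>j\<in>K. within_rate C k n p (3 * (smin * 2 ^ j)) (bh j \<omega>) \<beta>"
    then obtain j where "lepski_index smin smax C k n p (\<lambda>i. bh i \<omega>) = Some j"
        "within_rate C k n p (9 * (smin * 2 ^ jo)) (bh j \<omega>) \<beta>"
      using lepski_index_within_rate[OF assms(1-3) jo, where bh="\<lambda>i. bh i \<omega>" and k=k and n=n and \<beta>=\<beta>]
      by (auto simp: K_def)
    with assms(1,2,6) show "\<exists>j. lepski_index smin smax C k n p (\<lambda>i. bh i \<omega>) = Some j \<and>
        within_rate C k n p \<tau> (bh j \<omega>) \<beta>"
      by (blast intro: within_rate_mono)
  qed measurable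
  finally show ?thesis .
qed

theorem theorem2:
  fixes M :: "'a measure"
    and x :: "nat \<Rightarrow> 'a \<Rightarrow> real ^ 'p"
    and eps y :: "nat \<Rightarrow> 'a \<Rightarrow> real"
    and beta_star :: "real ^ 'p"
    and betahat :: "real \<Rightarrow> 'a \<Rightarrow> real ^ 'p"
    and B :: "real ^ 'p ^ 'p"
    and n k :: nat
    and b lam c0 c c' C sigma_star sigma_min sigma_max :: real
  assumes M: "prob_space M"
    \<comment> \<open>data model: i.i.d. pairs (x_i, eps_i), y_i = x_i^T beta* + eps_i\<close>
    and x_meas: "\<And>i. x i \<in> borel_measurable M"
    and eps_meas: "\<And>i. eps i \<in> borel_measurable M"
    and y_def: "\<And>i \<omega>. y i \<omega> = x i \<omega> \<bullet> beta_star + eps i \<omega>"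
    and iid_indep: "prob_space.indep_vars M (\<lambda>_. borel) (\<lambda>i \<omega>. (x i \<omega>, eps i \<omega>)) {..<n}"
    and iid_dist: "\<And>i. distr M borel (\<lambda>\<omega>. (x i \<omega>, eps i \<omega>)) = distr M borel (\<lambda>\<omega>. (x 0 \<omega>, eps 0 \<omega>))"
    and x_eps_indep: "\<And>i. distr M (borel \<Otimes>\<^sub>M borel) (\<lambda>\<omega>. (x i \<omega>, eps i \<omega>))
               = distr M borel (x i) \<Otimes>\<^sub>M distr M borel (eps i)"
    and x_int: "\<And>i. integrable M (x i)"
    and x_mean: "\<And>i. integral\<^sup>L M (x i) = 0"
    and eps_sq_int: "\<And>i. integrable M (\<lambda>\<omega>. (eps i \<omega>)\<^sup>2)"
    and eps_mean: "\<And>i. integral\<^sup>L M (eps i) = 0"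
    and eps_sym: "\<And>i. distr M borel (eps i) = distr M borel (\<lambda>\<omega>. - eps i \<omega>)"
    and sigma_star_def: "sigma_star = sqrt (integral\<^sup>L M (\<lambda>\<omega>. (eps 0 \<omega> - integral\<^sup>L M (eps 0))\<^sup>2))"
    and sparse: "l0norm beta_star \<le> k"
    and k_lt_n: "k < n"
    and n_lt_p: "n < CARD('p)"
    \<comment> \<open>tuning and constants\<close>
    and b_pos: "b > 0"
    and consts_pos: "c0 > 0" "c > 0" "c' > 0" "C > 0"
    and lam_def: "lam = 2 * c0 * (b / lambda_min B) * sqrt (ln (real CARD('p)) / real n)"
    \<comment> \<open>betahat tau is a global minimizer of the penalized weighted Huber objective\<close>
    and betahat_min: "\<And>\<tau> \<omega> \<beta>. \<tau> > 0 \<Longrightarrow> \<omega> \<in> space M \<Longrightarrow>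
        huber_obj n b B lam \<tau> (\<lambda>i. x i \<omega>) (\<lambda>i. y i \<omega>) (betahat \<tau> \<omega>)
          \<le> huber_obj n b B lam \<tau> (\<lambda>i. x i \<omega>) (\<lambda>i. y i \<omega>) \<beta>"
    and betahat_meas: "\<And>\<tau>. \<tau> > 0 \<Longrightarrow> betahat \<tau> \<in> borel_measurable M"
    \<comment> \<open>the single-tau guarantee from the context (under the tau-independent conditions)\<close>
    and guarantee: "\<And>\<tau>. \<tau> \<ge> 3 * sigma_star \<Longrightarrow>
        measure M {\<omega> \<in> space M.
            norm (betahat \<tau> \<omega> - beta_star) \<le> C * \<tau> * sqrt (real k * ln (real CARD('p)) / real n) \<and>
            l1norm (betahat \<tau> \<omega> - beta_star) \<le> 4 * C * \<tau> * real k * sqrt (ln (real CARD('p)) / real n)}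
          \<ge> 1 - c * exp (- c' * real n)"
    \<comment> \<open>range of the noise level\<close>
    and sig: "0 < sigma_min" "sigma_min \<le> sigma_star" "sigma_star \<le> sigma_max"
    and sig_strict: "sigma_min < sigma_max"
  shows "measure M {\<omega> \<in> space M.
            \<exists>j. lepski_index sigma_min sigma_max C k n CARD('p)
                  (\<lambda>i. betahat (3 * (sigma_min * 2 ^ i)) \<omega>) = Some j \<and>
                norm (betahat (3 * (sigma_min * 2 ^ j)) \<omega> - beta_star)
                  \<le> 18 * C * sigma_star * sqrt (real k * ln (real CARD('p)) / real n) \<and>
                l1norm (betahat (3 * (sigma_min * 2 ^ j)) \<omega> - beta_star)
                  \<le> 72 * C * sigma_star * real k * sqrt (ln (real CARD('p)) / real n)}
         \<ge> 1 - log 2 (4 * sigma_max / sigma_min) * c * exp (- c' * real n)"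
proof -
  interpret prob_space M by (rule M)
  define bh where "bh j = betahat (3 * (sigma_min * 2 ^ j))" for j
  have [measurable]: "bh j \<in> borel_measurable M" for j
    unfolding bh_def using sig(1) by (intro betahat_meas) simp
  obtain jo where jo: "jo \<in> lepski_J sigma_min sigma_max"
    "sigma_star \<le> sigma_min * 2 ^ jo" "sigma_min * 2 ^ jo \<le> 2 * sigma_star"
    using lepski_J_brackets[OF sig sig_strict] by blast
  have "real (card (lepski_J sigma_min sigma_max)) \<le> log 2 (2 * sigma_max / sigma_min)"
    using sig sig_strict by (intro card_lepski_J_le_log) auto
  also have "\<dots> \<le> log 2 (4 * sigma_max / sigma_min)"
    using sig sig_strict by (simp add: divide_right_mono)
  finally have "1 - log 2 (4 * sigma_max / sigma_min) * c * exp (- c' * real n)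
      \<le> 1 - real (card (lepski_J sigma_min sigma_max)) * (c * exp (- c' * real n))"
    using consts_pos(2) by (simp add: mult.assoc mult_right_mono)
  \<comment> \<open>The data-model hypotheses enter only through guarantee, used at the levels \<tau> = 3 \<sigma>_j \<ge> 3 \<sigma>*.\<close>
  also have "\<dots> \<le> \<P>(\<omega> in M. \<exists>j. lepski_index sigma_min sigma_max C k n CARD('p) (\<lambda>i. bh i \<omega>) = Some j \<and>
      within_rate C k n CARD('p) (18 * sigma_star) (bh j \<omega>) beta_star)"
  proof (rule lepski_index_within_rate_prob[OF _ _ sig(1) _ jo(1)])
    fix j assume "j \<in> lepski_J sigma_min sigma_max" "jo \<le> j"
    then have "sigma_min * 2 ^ jo \<le> sigma_min * 2 ^ j" using sig(1) by simp
    then have "3 * sigma_star \<le> 3 * (sigma_min * 2 ^ j)" using jo(2) by linarith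
    from guarantee[OF this] show "\<P>(\<omega> in M. within_rate C k n CARD('p) (3 * (sigma_min * 2 ^ j)) (bh j \<omega>) beta_star)
        \<ge> 1 - c * exp (- c' * real n)"
      unfolding within_rate_def bh_def .
  qed (use consts_pos jo(3) in auto)
  finally show ?thesis
    unfolding bh_def within_rate_def by (simp add: algebra_simps)
qed

end
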